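(* Given an LDODOSP instance, let $(S^d,T^d)_{d\in\{1,\dots,D\}}$ be feasible period counters. Then: $T^{l_w}=0$ and $S^{D-l_w+1}=S^D$; $T^{d+l_w}\le S^d$ for all $1\le d\le D-l_w$; $S^d\le T^{d+u_w}$ for all $1\le d\le D-u_w$; $S^1=S^{l_o}$ and $T^{D-l_o+1}=T^D$; $S^{d+l_o}-N\le T^d$ for all $1\le d\le D-l_o$; $T^d+N\le S^{d+u_o}$ for all $1\le d\le D-u_o$; $r_l^d\le S^d-T^d\le r_u^d$ for all $1\le d\le D$.
   Context: An instance of the Days On Days Off Scheduling Problem (DODOSP) consists of integers $D\ge 1$ (days), $N\ge 1$ (workers), bounds $l_w,u_w,l_o,u_o,U_w,U_o\in\mathbb{N}$, and for each day $d\in\{1,\dots,D\}$ integers $0\le r_l^d\le r_u^d\le N$. A schedule is a map $f:\{n_1,\dots,n_N\}\times\{1,\dots,D\}\to\{\mathrm{ON},\mathrm{OFF}\}$ (not cyclic). A work period (resp. off period) of a worker is an inclusion-wise maximal set of consecutive days on which the worker is ON (resp. OFF). A schedule is feasible if on every day $d$ the number of workers that are ON lies in $[r_l^d,r_u^d]$, every work period has length between $l_w$ and $u_w$, every off period has length between $l_o$ and $u_o$, every worker is ON on at most $U_w$ days and OFF on at most $U_o$ days. The LDODOSP is the DODOSP restricted to instances with $U_w=U_o=D$. Integers $(S^d,T^d)_{d\in\{1,\dots,D\}}$ are period counters representing a schedule if for each $d$, $S^d$ is the number of work periods (over all workers) whose first day is among days $1,\dots,d$, and $T^d$ is the number of work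 periods whose last day is among days $1,\dots,d-1$. Period counters are feasible (for a given instance) if they represent a feasible schedule of that instance. *)

theory Defs
  imports Main
begin

text \<open>A schedule is f :: nat \<Rightarrow> nat \<Rightarrow> bool; f i d = True means worker i (0 \<le> i < N)
  is ON on day d (1 \<le> d \<le> D); False means OFF. Values outside this range are irrelevant.\<close>

definition consecutive :: "nat set \<Rightarrow> bool" where
  "consecutive P \<longleftrightarrow> (\<exists>a b. a \<le> b \<and> P = {a..b})"

definition status_block :: "nat \<Rightarrow> (nat \<Rightarrow> nat \<Rightarrow> bool) \<Rightarrow> nat \<Rightarrow> bool \<Rightarrow> nat set \<Rightarrow> bool" where
  "status_block D f i v P \<longleftrightarrow> consecutive P \<and> P \<subseteq> {1..D} \<and> (\<forall>d\<in>P. f i d = v)"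

definition period :: "nat \<Rightarrow> (nat \<Rightarrow> nat \<Rightarrow> bool) \<Rightarrow> nat \<Rightarrow> bool \<Rightarrow> nat set \<Rightarrow> bool" where
  "period D f i v P \<longleftrightarrow> status_block D f i v P \<and>
     (\<forall>Q. status_block D f i v Q \<and> P \<subseteq> Q \<longrightarrow> Q = P)"

definition feasible_schedule ::
  "nat \<Rightarrow> nat \<Rightarrow> nat \<Rightarrow> nat \<Rightarrow> nat \<Rightarrow> nat \<Rightarrow> nat \<Rightarrow> nat \<Rightarrow> (nat \<Rightarrow> nat) \<Rightarrow> (nat \<Rightarrow> nat)
   \<Rightarrow> (nat \<Rightarrow> nat \<Rightarrow> bool) \<Rightarrow> bool" where
  "feasible_schedule D N lw uw lo uo Uw Uo rl ru f \<longleftrightarrow>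
     (\<forall>d\<in>{1..D}. rl d \<le> card {i. i < N \<and> f i d} \<and> card {i. i < N \<and> f i d} \<le> ru d) \<and>
     (\<forall>i<N. \<forall>P. period D f i True P \<longrightarrow> lw \<le> card P \<and> card P \<le> uw) \<and>
     (\<forall>i<N. \<forall>P. period D f i False P \<longrightarrow> lo \<le> card P \<and> card P \<le> uo) \<and>
     (\<forall>i<N. card {d\<in>{1..D}. f i d} \<le> Uw \<and> card {d\<in>{1..D}. \<not> f i d} \<le> Uo)"

definition represents :: "nat \<Rightarrow> nat \<Rightarrow> (nat \<Rightarrow> nat \<Rightarrow> bool) \<Rightarrow> (nat \<Rightarrow> int) \<Rightarrow> (nat \<Rightarrow> int) \<Rightarrow> bool" where
  "represents D N f S T \<longleftrightarrow>
     (\<forall>d\<in>{1..D}.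
        S d = int (card {(i, P). i < N \<and> period D f i True P \<and> Min P \<le> d}) \<and>
        T d = int (card {(i, P). i < N \<and> period D f i True P \<and> Max P \<le> d - 1}))"

definition feasible_counters ::
  "nat \<Rightarrow> nat \<Rightarrow> nat \<Rightarrow> nat \<Rightarrow> nat \<Rightarrow> nat \<Rightarrow> nat \<Rightarrow> nat \<Rightarrow> (nat \<Rightarrow> nat) \<Rightarrow> (nat \<Rightarrow> nat)
   \<Rightarrow> (nat \<Rightarrow> int) \<Rightarrow> (nat \<Rightarrow> int) \<Rightarrow> bool" where
  "feasible_counters D N lw uw lo uo Uw Uo rl ru S T \<longleftrightarrow>
     (\<exists>f. feasible_schedule D N lw uw lo uo Uw Uo rl ru f \<and> represents D N f S T)"

end

theory Submission
  imports Defs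
begin

text \<open>For days \<open>a \<le> b\<close>, \<open>S\<^sup>b - T\<^sup>a\<close> counts the work periods meeting the window
  \<open>{a..b}\<close>, and all seven claims compare sets of work periods with each other or with the set
  of workers. Two work periods of
  one worker, and a work period and the ends of the horizon, are separated by an off period of
  at least \<open>l\<^sub>o\<close> days, so a window of \<open>l\<^sub>o + 1\<close> days meets at most one work period per
  worker; off periods last at most \<open>u\<^sub>o\<close> days, so a window of \<open>u\<^sub>o + 1\<close> days meets a work
  period of every worker. Finally, the work periods containing day \<open>d\<close> correspond to the
  workers that are ON on day \<open>d\<close>.\<close>

lemma consecutive_atLeastAtMost_iff: "consecutive {a..b} \<longleftrightarrow> a \<le> b"
  unfolding consecutive_def by (metis atLeastatMost_empty_iff)

lemma status_block_atLeastAtMost_iff: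
  "status_block D f i v {a..b} \<longleftrightarrow> a \<le> b \<and> 1 \<le> a \<and> b \<le> D \<and> (\<forall>x\<in>{a..b}. f i x = v)"
  by (auto simp: status_block_def consecutive_atLeastAtMost_iff)

lemma period_interval:
  assumes "period D f i v P"
  shows period_eq_atLeastAtMost: "P = {Min P..Max P}"
    and period_bounds: "1 \<le> Min P" "Min P \<le> Max P" "Max P \<le> D"
    and period_status: "\<And>x. x \<in> P \<Longrightarrow> f i x = v"
proof -
  obtain a b where ab: "a \<le> b" "P = {a..b}" "P \<subseteq> {1..D}" "\<forall>x\<in>P. f i x = v"
    using assms unfolding period_def status_block_def consecutive_def by blast
  then have "Min P = a" "Max P = b" by (auto intro: Min_eqI Max_eqI)
  with ab show "P = {Min P..Max P}" "1 \<le> Min P" "Min P \<le> Max P" "Max P \<le> D"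
    and "\<And>x. x \<in> P \<Longrightarrow> f i x = v" by auto
qed

lemma period_mem_iff:
  assumes "period D f i v P"
  shows "x \<in> P \<longleftrightarrow> Min P \<le> x \<and> x \<le> Max P"
  by (subst period_eq_atLeastAtMost[OF assms]) simp

lemma Min_in_period: "period D f i v P \<Longrightarrow> Min P \<in> P"
  and Max_in_period: "period D f i v P \<Longrightarrow> Max P \<in> P"
  using period_mem_iff period_bounds(2) by blast+

lemma finite_period:
  assumes "period D f i v P"
  shows "finite P"
  by (subst period_eq_atLeastAtMost[OF assms]) simp

lemma card_period:
  assumes "period D f i v P"
  shows "card P = Suc (Max P) - Min P"
  by (subst period_eq_atLeastAtMost[OF assms]) simp

lemma period_maximal:
  assumes "period D f i v P" "status_block D f i v B" "P \<subseteq> B"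
  shows "B = P"
  using assms unfolding period_def by blast

lemma status_block_Un:
  assumes "status_block D f i v B" "status_block D f i v C" "B \<inter> C \<noteq> {}"
  shows "status_block D f i v (B \<union> C)"
proof -
  obtain a b c e where "B = {a..b}" "C = {c..e}"
    using assms(1,2) unfolding status_block_def consecutive_def by blast
  with assms(3) have "B \<union> C = {min a c..max b e}" "min a c \<le> max b e"
    by (auto simp: min_def max_def)
  then have "consecutive (B \<union> C)" unfolding consecutive_def by blast
  with assms(1,2) show ?thesis unfolding status_block_def by blast
qed

lemma status_block_subset_period:
  assumes "status_block D f i v B" "period D f i v P" "B \<inter> P \<noteq> {}"
  shows "B \<subseteq> P"
proof -
  have "status_block D f i v (B \<union> P)"
    using status_block_Un assms unfolding period_def by blast
  then show ?thesis using period_maximal[OF assms(2)] by blast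
qed

lemma period_unique:
  assumes "period D f i v P" "period D f i v Q" "x \<in> P" "x \<in> Q"
  shows "P = Q"
  using status_block_subset_period assms unfolding period_def by blast

lemma periods_ordered:
  assumes P: "period D f i v P" and Q: "period D f i v Q" and "P \<noteq> Q"
  shows "Max P < Min Q \<or> Max Q < Min P"
proof (rule ccontr)
  assume "\<not> ?thesis"
  then have "max (Min P) (Min Q) \<in> P" "max (Min P) (Min Q) \<in> Q"
    using period_bounds(2)[OF P] period_bounds(2)[OF Q]
    unfolding period_mem_iff[OF P] period_mem_iff[OF Q] by linarith+
  then show False using period_unique[OF P Q] assms(3) by blast
qed

lemma period_exists:
  assumes "d \<in> {1..D}" "f i d = v"
  obtains P where "period D f i v P" "d \<in> P"
proof -
  define F where "F = {B. status_block D f i v B \<and> d \<in> B}"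
  have "F \<subseteq> Pow {1..D}" unfolding F_def status_block_def by blast
  then have "finite F" by (rule finite_subset) simp
  have "status_block D f i v {d..d}"
    using assms by (subst status_block_atLeastAtMost_iff) auto
  then have "F \<noteq> {}" unfolding F_def by auto
  obtain P where "P \<in> F" and maximal: "\<forall>B\<in>F. P \<subseteq> B \<longrightarrow> B = P"
    using finite_has_maximal[OF \<open>finite F\<close> \<open>F \<noteq> {}\<close>] by blast
  have "period D f i v P"
    unfolding period_def
  proof (intro conjI allI impI)
    show "status_block D f i v P" using \<open>P \<in> F\<close> unfolding F_def by simp
    fix B assume "status_block D f i v B \<and> P \<subseteq> B"
    then show "B = P" using maximal \<open>P \<in> F\<close> unfolding F_def by blast
  qed
  with \<open>P \<in> F\<close> show thesis using that unfolding F_def by blast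
qed

lemma period_Suc_Max:
  assumes P: "period D f i v P" and "Max P < D"
  shows "f i (Suc (Max P)) \<noteq> v"
proof
  assume "f i (Suc (Max P)) = v"
  with Max_in_period[OF P] period_status[OF P] period_bounds[OF P] assms(2)
  have "status_block D f i v {Max P..Suc (Max P)}"
    by (auto simp: status_block_atLeastAtMost_iff le_Suc_eq)
  moreover have "Max P \<in> {Max P..Suc (Max P)} \<inter> P" using Max_in_period[OF P] by simp
  ultimately have "Suc (Max P) \<in> P" using status_block_subset_period[OF _ P] by fastforce
  then show False using period_mem_iff[OF P] by simp
qed

lemma period_pred_Min:
  assumes P: "period D f i v P" and "1 < Min P"
  shows "f i (Min P - 1) \<noteq> v"
proof
  assume "f i (Min P - 1) = v"
  with Min_in_period[OF P] period_status[OF P] period_bounds[OF P] assms(2)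
  have "status_block D f i v {Min P - 1..Min P}"
    by (auto simp: status_block_atLeastAtMost_iff le_eq_less_or_eq)
  moreover have "Min P \<in> {Min P - 1..Min P} \<inter> P" using Min_in_period[OF P] by simp
  ultimately have "Min P - 1 \<in> P" using status_block_subset_period[OF _ P] by fastforce
  then have "Min P \<le> Min P - 1" unfolding period_mem_iff[OF P] by simp
  with assms(2) show False by linarith
qed

text \<open>Here and below, the days \<open>0\<close> and \<open>Suc D\<close> play the role of the horizon's
  boundaries, which end a period just like a day of the opposite status.\<close>

lemma period_between:
  assumes Q: "period D f i v Q" and "x \<in> Q" "a < x" "x < b"
    and "a = 0 \<or> f i a \<noteq> v" "b = Suc D \<or> f i b \<noteq> v"
  shows "Q \<subseteq> {a<..<b}"
proof
  fix y assume "y \<in> Q"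
  have "a \<notin> Q" "b \<notin> Q"
    using assms(5,6) period_status[OF Q] period_bounds[OF Q] unfolding period_mem_iff[OF Q]
    by auto
  moreover have "a < y \<or> a \<in> Q" "y < b \<or> b \<in> Q"
    using \<open>y \<in> Q\<close> assms(2-4) unfolding period_mem_iff[OF Q] by linarith+
  ultimately show "y \<in> {a<..<b}" by simp
qed

lemma gap_around_off_day:
  assumes off_long: "\<And>Q. period D f i False Q \<Longrightarrow> lo \<le> card Q"
    and "x \<in> {1..D}" "\<not> f i x" "a < x" "x < b" "a = 0 \<or> f i a" "b = Suc D \<or> f i b"
  shows "a + lo < b"
proof -
  obtain Q where Q: "period D f i False Q" "x \<in> Q"
    using period_exists[OF assms(2), of f i False] assms(3) by auto
  have "Q \<subseteq> {a<..<b}"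
    using period_between[OF Q] assms(4-7) by simp
  then have "card Q \<le> b - Suc a" using card_mono[of "{a<..<b}" Q] by simp
  with off_long[OF Q(1)] assms(4,5) show ?thesis by linarith
qed

lemma work_periods_gap:
  assumes off_long: "\<And>Q. period D f i False Q \<Longrightarrow> lo \<le> card Q"
    and P1: "period D f i True P1" and P2: "period D f i True P2" and "Max P1 < Min P2"
  shows "Max P1 + lo < Min P2"
proof (rule gap_around_off_day[OF off_long])
  have "f i (Max P1)" "f i (Min P2)"
    using period_status[OF P1 Max_in_period[OF P1]] period_status[OF P2 Min_in_period[OF P2]]
    by simp_all
  then show "Max P1 = 0 \<or> f i (Max P1)" "Min P2 = Suc D \<or> f i (Min P2)" by simp_all
  have "Max P1 < D" using assms(4) period_bounds(2,3)[OF P2] by linarith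
  then show "Suc (Max P1) \<in> {1..D}" "\<not> f i (Suc (Max P1))"
    using period_Suc_Max[OF P1] by auto
  with \<open>f i (Min P2)\<close> show "Suc (Max P1) < Min P2"
    using assms(4) by (metis Suc_leI le_neq_implies_less)
  show "Max P1 < Suc (Max P1)" by simp
qed

lemma late_work_period_start:
  assumes off_long: "\<And>Q. period D f i False Q \<Longrightarrow> lo \<le> card Q"
    and P: "period D f i True P" and "1 < Min P"
  shows "lo < Min P"
proof -
  have "0 + lo < Min P"
  proof (rule gap_around_off_day[OF off_long])
    show "Min P - 1 \<in> {1..D}" "\<not> f i (Min P - 1)"
      using period_pred_Min[OF P assms(3)] period_bounds[OF P] assms(3) by auto
    show "Min P = Suc D \<or> f i (Min P)"
      using period_status[OF P Min_in_period[OF P]] by simp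
  qed (use assms(3) in auto)
  then show ?thesis by simp
qed

lemma early_work_period_end:
  assumes off_long: "\<And>Q. period D f i False Q \<Longrightarrow> lo \<le> card Q"
    and P: "period D f i True P" and "Max P < D"
  shows "Max P + lo \<le> D"
proof -
  have "Max P + lo < Suc D"
  proof (rule gap_around_off_day[OF off_long])
    show "Suc (Max P) \<in> {1..D}" "\<not> f i (Suc (Max P))"
      using period_Suc_Max[OF P assms(3)] assms(3) by auto
    show "Max P = 0 \<or> f i (Max P)"
      using period_status[OF P Max_in_period[OF P]] by simp
  qed (use assms(3) in auto)
  then show ?thesis by simp
qed

lemma work_period_meets_window:
  assumes off_short: "\<And>Q. period D f i False Q \<Longrightarrow> card Q \<le> uo"
    and "1 \<le> a" "a + uo \<le> b" "b \<le> D"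
  obtains P where "period D f i True P" "Min P \<le> b" "a \<le> Max P"
proof (cases "\<exists>x\<in>{a..b}. f i x")
  case True
  then obtain x where "x \<in> {a..b}" "f i x" by blast
  moreover obtain P where "period D f i True P" "x \<in> P"
    using period_exists[of x D f i True] calculation assms(2,4) by auto
  ultimately show thesis using that period_mem_iff by fastforce
next
  case False
  then have "status_block D f i False {a..b}"
    using assms(2-4) by (subst status_block_atLeastAtMost_iff) auto
  moreover obtain Q where Q: "period D f i False Q" "a \<in> Q"
    using period_exists[of a D f i False] False assms(2-4) by auto
  moreover have "a \<in> {a..b} \<inter> Q" using Q(2) assms(3) by simp
  ultimately have "{a..b} \<subseteq> Q"
    using status_block_subset_period by blast
  then have "card {a..b} \<le> card Q"
    using finite_period[OF Q(1)] by (rule card_mono[rotated])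
  with off_short[OF Q(1)] assms(3) show thesis by simp
qed

lemma inj_on_fst_single_valued: "single_valued A \<Longrightarrow> inj_on fst A"
  unfolding single_valued_def by (auto intro!: inj_onI)

definition work_periods_started ::
    "nat \<Rightarrow> nat \<Rightarrow> (nat \<Rightarrow> nat \<Rightarrow> bool) \<Rightarrow> nat \<Rightarrow> (nat \<times> nat set) set"
  where "work_periods_started D N f d = {(i, P). i < N \<and> period D f i True P \<and> Min P \<le> d}"

definition work_periods_ended_before ::
    "nat \<Rightarrow> nat \<Rightarrow> (nat \<Rightarrow> nat \<Rightarrow> bool) \<Rightarrow> nat \<Rightarrow> (nat \<times> nat set) set"
  where "work_periods_ended_before D N f d =
    {(i, P). i < N \<and> period D f i True P \<and> Max P \<le> d - 1}"

definition work_periods_meeting ::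
    "nat \<Rightarrow> nat \<Rightarrow> (nat \<Rightarrow> nat \<Rightarrow> bool) \<Rightarrow> nat \<Rightarrow> nat \<Rightarrow> (nat \<times> nat set) set"
  where "work_periods_meeting D N f a b =
    {(i, P). i < N \<and> period D f i True P \<and> Min P \<le> b \<and> a \<le> Max P}"

lemma finite_periods: "finite {(i, P). i < N \<and> period D f i v P \<and> R i P}"
proof (rule finite_subset)
  show "{(i, P). i < N \<and> period D f i v P \<and> R i P} \<subseteq> {..<N} \<times> Pow {1..D}"
    unfolding period_def status_block_def by blast
qed simp

lemma finite_work_periods_started: "finite (work_periods_started D N f d)"
  unfolding work_periods_started_def by (rule finite_periods)

lemma finite_work_periods_ended_before: "finite (work_periods_ended_before D N f d)"
  unfolding work_periods_ended_before_def by (rule finite_periods)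

lemma finite_work_periods_meeting: "finite (work_periods_meeting D N f a b)"
  unfolding work_periods_meeting_def by (rule finite_periods)

lemma represents_card:
  assumes "represents D N f S T" "d \<in> {1..D}"
  shows "S d = int (card (work_periods_started D N f d))"
    and "T d = int (card (work_periods_ended_before D N f d))"
  using assms unfolding represents_def work_periods_started_def work_periods_ended_before_def
  by auto

lemma represents_diff_card_meeting:
  assumes "represents D N f S T" "a \<in> {1..D}" "b \<in> {1..D}" "a \<le> b"
  shows "S b - T a = int (card (work_periods_meeting D N f a b))"
proof -
  have subset: "work_periods_ended_before D N f a \<subseteq> work_periods_started D N f b"
    using assms(4) period_bounds(2)
    unfolding work_periods_ended_before_def work_periods_started_def by fastforce
  have "work_periods_started D N f b - work_periods_ended_before D N f a
      = work_periods_meeting D N f a b"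
    using assms(2)
    unfolding work_periods_started_def work_periods_ended_before_def work_periods_meeting_def
    by auto
  then have "card (work_periods_meeting D N f a b)
      = card (work_periods_started D N f b) - card (work_periods_ended_before D N f a)"
    using card_Diff_subset[OF finite_work_periods_ended_before subset] by simp
  moreover have "card (work_periods_ended_before D N f a) \<le> card (work_periods_started D N f b)"
    using card_mono[OF finite_work_periods_started subset] .
  ultimately show ?thesis
    using represents_card[OF assms(1)] assms(2,3) by simp
qed

lemma work_periods_ended_before_min_length:
  assumes work_long: "\<And>i P. i < N \<Longrightarrow> period D f i True P \<Longrightarrow> lw \<le> card P"
  shows "work_periods_ended_before D N f lw = {}"
proof -
  have False if "i < N" "period D f i True P" "Max P \<le> lw - 1" for i P
    using work_long[OF that(1,2)] card_period[OF that(2)] period_bounds[OF that(2)] that(3)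
    by linarith
  then show ?thesis unfolding work_periods_ended_before_def by blast
qed

lemma work_periods_started_min_length:
  assumes work_long: "\<And>i P. i < N \<Longrightarrow> period D f i True P \<Longrightarrow> lw \<le> card P"
  shows "work_periods_started D N f (D - lw + 1) = work_periods_started D N f D"
proof -
  have "Min P \<le> D - lw + 1 \<longleftrightarrow> Min P \<le> D" if "i < N" "period D f i True P" for i P
    using work_long[OF that] card_period[OF that(2)] period_bounds[OF that(2)] by linarith
  then show ?thesis unfolding work_periods_started_def by blast
qed

lemma work_periods_ended_before_subset_started:
  assumes work_long: "\<And>i P. i < N \<Longrightarrow> period D f i True P \<Longrightarrow> lw \<le> card P"
  shows "work_periods_ended_before D N f (d + lw) \<subseteq> work_periods_started D N f d"
proof -
  have "Min P \<le> d" if "i < N" "period D f i True P" "Max P \<le> d + lw - 1" for i P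
    using work_long[OF that(1,2)] card_period[OF that(2)] period_bounds[OF that(2)] that(3)
    by linarith
  then show ?thesis unfolding work_periods_ended_before_def work_periods_started_def by blast
qed

lemma work_periods_started_subset_ended_before:
  assumes work_short: "\<And>i P. i < N \<Longrightarrow> period D f i True P \<Longrightarrow> card P \<le> uw"
  shows "work_periods_started D N f d \<subseteq> work_periods_ended_before D N f (d + uw)"
proof -
  have "Max P \<le> d + uw - 1" if "i < N" "period D f i True P" "Min P \<le> d" for i P
    using work_short[OF that(1,2)] card_period[OF that(2)] period_bounds[OF that(2)] that(3)
    by linarith
  then show ?thesis unfolding work_periods_ended_before_def work_periods_started_def by blast
qed

lemma work_periods_started_min_off_length:
  assumes off_long: "\<And>i Q. i < N \<Longrightarrow> period D f i False Q \<Longrightarrow> lo \<le> card Q"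
    and "1 \<le> lo"
  shows "work_periods_started D N f lo = work_periods_started D N f 1"
proof -
  have "Min P \<le> lo \<longleftrightarrow> Min P \<le> 1" if "i < N" "period D f i True P" for i P
    using late_work_period_start[OF off_long[OF that(1)] that(2)] assms(2) by linarith
  then show ?thesis unfolding work_periods_started_def by blast
qed

lemma work_periods_ended_before_min_off_length:
  assumes off_long: "\<And>i Q. i < N \<Longrightarrow> period D f i False Q \<Longrightarrow> lo \<le> card Q"
    and "1 \<le> lo"
  shows "work_periods_ended_before D N f (D - lo + 1) = work_periods_ended_before D N f D"
proof -
  have "Max P \<le> D - lo + 1 - 1 \<longleftrightarrow> Max P \<le> D - 1" if "i < N" "period D f i True P" for i P
    using early_work_period_end[OF off_long[OF that(1)] that(2)] assms(2) by linarith
  then show ?thesis unfolding work_periods_ended_before_def by blast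
qed

lemma card_work_periods_meeting_le:
  assumes off_long: "\<And>i Q. i < N \<Longrightarrow> period D f i False Q \<Longrightarrow> lo \<le> card Q"
    and "b \<le> a + lo"
  shows "card (work_periods_meeting D N f a b) \<le> N"
proof -
  have "inj_on fst (work_periods_meeting D N f a b)"
  proof (intro inj_on_fst_single_valued single_valuedI)
    fix i P Q
    assume "(i, P) \<in> work_periods_meeting D N f a b" "(i, Q) \<in> work_periods_meeting D N f a b"
    then have i: "i < N" and P: "period D f i True P" "Min P \<le> b" "a \<le> Max P"
      and Q: "period D f i True Q" "Min Q \<le> b" "a \<le> Max Q"
      unfolding work_periods_meeting_def by auto
    show "P = Q"
    proof (rule ccontr)
      assume "P \<noteq> Q"
      then consider "Max P < Min Q" | "Max Q < Min P"
        using periods_ordered[OF P(1) Q(1)] by blast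
      then show False
        using work_periods_gap[OF off_long[OF i] P(1) Q(1)]
          work_periods_gap[OF off_long[OF i] Q(1) P(1)] P Q assms(2)
        by cases linarith+
    qed
  qed
  moreover have "fst ` work_periods_meeting D N f a b \<subseteq> {..<N}"
    unfolding work_periods_meeting_def by auto
  ultimately show ?thesis
    using card_inj_on_le[of fst _ "{..<N}"] by simp
qed

lemma card_work_periods_meeting_ge:
  assumes off_short: "\<And>i Q. i < N \<Longrightarrow> period D f i False Q \<Longrightarrow> card Q \<le> uo"
    and "1 \<le> a" "a + uo \<le> b" "b \<le> D"
  shows "N \<le> card (work_periods_meeting D N f a b)"
proof -
  have "{..<N} \<subseteq> fst ` work_periods_meeting D N f a b"
  proof
    fix i assume "i \<in> {..<N}"
    then have "i < N" by simp
    then obtain P where "period D f i True P" "Min P \<le> b" "a \<le> Max P"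
      using work_period_meets_window[OF off_short[OF \<open>i < N\<close>] assms(2-4)] by blast
    with \<open>i \<in> {..<N}\<close> have "(i, P) \<in> work_periods_meeting D N f a b"
      unfolding work_periods_meeting_def by simp
    then show "i \<in> fst ` work_periods_meeting D N f a b" by force
  qed
  then have "N \<le> card (fst ` work_periods_meeting D N f a b)"
    using card_mono[OF finite_imageI[OF finite_work_periods_meeting]] by (metis card_lessThan)
  also have "\<dots> \<le> card (work_periods_meeting D N f a b)"
    using card_image_le[OF finite_work_periods_meeting] .
  finally show ?thesis .
qed

lemma card_work_periods_meeting_day:
  assumes "d \<in> {1..D}"
  shows "card (work_periods_meeting D N f d d) = card {i. i < N \<and> f i d}"
proof -
  have meeting: "(i, P) \<in> work_periods_meeting D N f d d \<longleftrightarrow>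
      i < N \<and> period D f i True P \<and> d \<in> P" for i P
    unfolding work_periods_meeting_def by (auto simp: period_mem_iff)
  have "inj_on fst (work_periods_meeting D N f d d)"
  proof (intro inj_on_fst_single_valued single_valuedI)
    fix i P Q
    assume "(i, P) \<in> work_periods_meeting D N f d d" "(i, Q) \<in> work_periods_meeting D N f d d"
    then have "period D f i True P" "period D f i True Q" "d \<in> P" "d \<in> Q"
      unfolding meeting by simp_all
    then show "P = Q" by (rule period_unique)
  qed
  moreover have "fst ` work_periods_meeting D N f d d = {i. i < N \<and> f i d}"
  proof (intro equalityI subsetI)
    fix i assume "i \<in> fst ` work_periods_meeting D N f d d"
    then obtain P where "(i, P) \<in> work_periods_meeting D N f d d" by force
    then show "i \<in> {i. i < N \<and> f i d}"
      unfolding meeting using period_status by fastforce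
  next
    fix i assume "i \<in> {i. i < N \<and> f i d}"
    then obtain P where "period D f i True P" "d \<in> P"
      using period_exists[OF assms, of f i True] by auto
    with \<open>i \<in> {i. i < N \<and> f i d}\<close> have "(i, P) \<in> work_periods_meeting D N f d d"
      unfolding meeting by simp
    then show "i \<in> fst ` work_periods_meeting D N f d d" by force
  qed
  ultimately show ?thesis using card_image by metis
qed

theorem lemma5p6:
  fixes D N lw uw lo uo :: nat and rl ru :: "nat \<Rightarrow> nat" and S T :: "nat \<Rightarrow> int"
  assumes "D \<ge> 1" and "N \<ge> 1"
    and "\<forall>d\<in>{1..D}. rl d \<le> ru d \<and> ru d \<le> N"
    and "feasible_counters D N lw uw lo uo D D rl ru S T"
  shows "(1 \<le> lw \<and> lw \<le> D \<longrightarrow> T lw = 0 \<and> S (D - lw + 1) = S D)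
    \<and> (\<forall>d. 1 \<le> d \<and> d + lw \<le> D \<longrightarrow> T (d + lw) \<le> S d)
    \<and> (\<forall>d. 1 \<le> d \<and> d + uw \<le> D \<longrightarrow> S d \<le> T (d + uw))
    \<and> (1 \<le> lo \<and> lo \<le> D \<longrightarrow> S 1 = S lo \<and> T (D - lo + 1) = T D)
    \<and> (\<forall>d. 1 \<le> d \<and> d + lo \<le> D \<longrightarrow> S (d + lo) - int N \<le> T d)
    \<and> (\<forall>d. 1 \<le> d \<and> d + uo \<le> D \<longrightarrow> T d + int N \<le> S (d + uo))
    \<and> (\<forall>d\<in>{1..D}. int (rl d) \<le> S d - T d \<and> S d - T d \<le> int (ru d))"
proof -
  obtain f where schedule: "feasible_schedule D N lw uw lo uo D D rl ru f"
    and rep: "represents D N f S T"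
    using assms(4) unfolding feasible_counters_def by blast
  have work_long: "\<And>i P. i < N \<Longrightarrow> period D f i True P \<Longrightarrow> lw \<le> card P"
    and work_short: "\<And>i P. i < N \<Longrightarrow> period D f i True P \<Longrightarrow> card P \<le> uw"
    and off_long: "\<And>i Q. i < N \<Longrightarrow> period D f i False Q \<Longrightarrow> lo \<le> card Q"
    and off_short: "\<And>i Q. i < N \<Longrightarrow> period D f i False Q \<Longrightarrow> card Q \<le> uo"
    and demand: "\<And>d. d \<in> {1..D} \<Longrightarrow>
      rl d \<le> card {i. i < N \<and> f i d} \<and> card {i. i < N \<and> f i d} \<le> ru d"
    using schedule unfolding feasible_schedule_def by blast+
  note S = represents_card(1)[OF rep] and T = represents_card(2)[OF rep]
  note S_minus_T = represents_diff_card_meeting[OF rep]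
  have "T lw = 0 \<and> S (D - lw + 1) = S D" if "1 \<le> lw" "lw \<le> D"
    using S T that work_periods_ended_before_min_length[OF work_long]
      work_periods_started_min_length[OF work_long] by simp
  moreover have "T (d + lw) \<le> S d" if "1 \<le> d" "d + lw \<le> D" for d
    using S T that card_mono[OF finite_work_periods_started
        work_periods_ended_before_subset_started[OF work_long]] by simp
  moreover have "S d \<le> T (d + uw)" if "1 \<le> d" "d + uw \<le> D" for d
    using S T that card_mono[OF finite_work_periods_ended_before
        work_periods_started_subset_ended_before[OF work_short]] by simp
  moreover have "S 1 = S lo \<and> T (D - lo + 1) = T D" if "1 \<le> lo" "lo \<le> D"
    using S T that work_periods_started_min_off_length[OF off_long]
      work_periods_ended_before_min_off_length[OF off_long] by simp
  moreover have "S (d + lo) - int N \<le> T d" if "1 \<le> d" "d + lo \<le> D" for d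
    using S_minus_T[of d "d + lo"] card_work_periods_meeting_le[of N D f lo "d + lo" d] off_long that
    by simp
  moreover have "T d + int N \<le> S (d + uo)" if "1 \<le> d" "d + uo \<le> D" for d
    using S_minus_T[of d "d + uo"] card_work_periods_meeting_ge[of N D f uo d "d + uo"] off_short that
    by simp
  moreover have "int (rl d) \<le> S d - T d \<and> S d - T d \<le> int (ru d)" if "d \<in> {1..D}" for d
    using S_minus_T[of d d] card_work_periods_meeting_day demand that by simp
  ultimately show ?thesis by blast
qed

end
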